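(* For $i\in\mathbb Z_{\ge0}$, $J\in\mathbb Z_{>0}$ and $0\le j\le J$, $$W_J(i,J;i+J-j,j\mid v,\lambda)=f(2\eta)^{J-j}\frac{[2\eta i-\eta\Lambda-v]_j}{[\eta\Lambda-v]_J}\cdot\frac{[v+\lambda-\eta\Lambda+2\eta(i+2J-j-1)]_{J-j}\,[\lambda+2\eta(i+J-\Lambda-1)]_j}{[\lambda+2\eta(J-1)]_J}.$$
   Context: Fix $\eta,\tau\in\mathbb C$, $\operatorname{Im}\tau>0$. $f(z)$ denotes either $\theta(z)=-\sum_{j\in\mathbb Z}\exp\big(\pi\mathbf i\tau(j+\tfrac12)^2+2\pi\mathbf i(j+\tfrac12)(z+\tfrac12)\big)$ or $\sin(\pi z)$. Elliptic Pochhammer: $[a]_k=\prod_{m=0}^{k-1}f(a-2\eta m)$ for $k\ge0$, $[a]_k=\prod_{m=1}^{-k}f(a+2\eta m)^{-1}$ for $k<0$. Unfused weights ($k\ge0$): $W_1(k,0;k,0\mid v,\lambda,\Lambda)=\frac{f(\eta(\Lambda-2k)-v)f(\lambda+2k\eta)}{f(\eta\Lambda-v)f(\lambda)}$, $W_1(k,1;k+1,0\mid\cdot)=\frac{f(v+\lambda+\eta(2k+2-\Lambda))f(2\eta)}{f(\eta\Lambda-v)f(\lambda)}$, $W_1(k,0;k-1,1\mid\cdot)=\frac{f(\lambda-v+\eta(2k-2-\Lambda))f(2\eta(\Lambda+1-k))f(2k\eta)}{f(\eta\Lambda-v)f(\lambda)f(2\eta)}$ ($k\ge1$), $W_1(k,1;k,1\mid\cdot)=\frac{f(\eta(2k-\Lambda)-v)f(\lambda+2\eta(k-\Lambda))}{f(\eta\Lambda-v)f(\lambda)}$,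 and $0$ for all other quadruples. Column weights: for $\mathcal J_1=(j_{1,k})_{k=1}^J,\mathcal J_2=(j_{2,k})_{k=1}^J\in\{0,1\}^J$, $i^{(1)}=i_1$, $i^{(k+1)}=i^{(k)}+j_{1,k}-j_{2,k}$, $\Phi_J=\lambda$, $\Phi_k=\Phi_{k+1}\mp2\eta$ according as $j_{1,k+1}=0$ or $1$; $W_J(i_1,\mathcal J_1;i_2,\mathcal J_2\mid v,\lambda)=\prod_{k=1}^JW_1(i^{(k)},j_{1,k};i^{(k+1)},j_{2,k}\mid v+2\eta(k-1),\Phi_k,\Lambda)$ if all $i^{(k)}\ge0$ and $i^{(J+1)}=i_2$, else $0$. The fused weight is $W_J(i_1,j_1;i_2,j_2\mid v,\lambda)=\sum_{|\mathcal J_1|=j_1}W_J(i_1,\mathcal J_1;i_2,\mathcal K\mid v,\lambda)$ for any $\mathcal K\in\{0,1\}^J$ with $|\mathcal K|=j_2$ (independent of the choice of $\mathcal K$), and $0$ if $j_2\notin\{0,\dots,J\}$; $\Lambda$ is a fixed parameter suppressed from notation. *)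

theory Defs
  imports "HOL-Analysis.Analysis"
begin

definition theta :: "complex \<Rightarrow> complex \<Rightarrow> complex" where
  "theta tau z = - (\<Sum>\<^sub>\<infinity> j::int.
      exp (of_real pi * \<i> * tau * (of_int j + 1/2)^2
           + 2 * of_real pi * \<i> * (of_int j + 1/2) * (z + 1/2)))"

definition sinpi :: "complex \<Rightarrow> complex" where
  "sinpi z = sin (of_real pi * z)"

text \<open>Elliptic Pochhammer symbol [a]_k.\<close>
definition epoch :: "(complex \<Rightarrow> complex) \<Rightarrow> complex \<Rightarrow> complex \<Rightarrow> int \<Rightarrow> complex" where
  "epoch f eta a k =
     (if k \<ge> 0 then (\<Prod>m<nat k. f (a - 2 * eta * of_nat m))
      else (\<Prod>m\<in>{1..nat (-k)}. inverse (f (a + 2 * eta * of_nat m))))"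

definition W1 :: "(complex \<Rightarrow> complex) \<Rightarrow> complex \<Rightarrow> complex \<Rightarrow>
    int \<Rightarrow> nat \<Rightarrow> int \<Rightarrow> nat \<Rightarrow> complex \<Rightarrow> complex \<Rightarrow> complex" where
  "W1 f eta Lam k j1 k' j2 v lam =
     (if k \<ge> 0 \<and> j1 = 0 \<and> k' = k \<and> j2 = 0 then
        f (eta * (Lam - 2 * of_int k) - v) * f (lam + 2 * of_int k * eta)
          / (f (eta * Lam - v) * f lam)
      else if k \<ge> 0 \<and> j1 = 1 \<and> k' = k + 1 \<and> j2 = 0 then
        f (v + lam + eta * (2 * of_int k + 2 - Lam)) * f (2 * eta)
          / (f (eta * Lam - v) * f lam)
      else if k \<ge> 1 \<and> j1 = 0 \<and> k' = k - 1 \<and> j2 = 1 then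
        f (lam - v + eta * (2 * of_int k - 2 - Lam)) * f (2 * eta * (Lam + 1 - of_int k))
          * f (2 * of_int k * eta)
          / (f (eta * Lam - v) * f lam * f (2 * eta))
      else if k \<ge> 0 \<and> j1 = 1 \<and> k' = k \<and> j2 = 1 then
        f (eta * (2 * of_int k - Lam) - v) * f (lam + 2 * eta * (of_int k - Lam))
          / (f (eta * Lam - v) * f lam)
      else 0)"

text \<open>Column weights W_J(i1, J1; i2, J2 | v, lam) for 0/1-lists J1, J2 of length J
  (0-based positions p = k - 1).\<close>
definition ipos :: "int \<Rightarrow> nat list \<Rightarrow> nat list \<Rightarrow> nat \<Rightarrow> int" where
  "ipos i1 xs ys p = i1 + (\<Sum>m<p. int (xs ! m) - int (ys ! m))"

definition Phi :: "complex \<Rightarrow> complex \<Rightarrow> nat list \<Rightarrow> nat \<Rightarrow> complex" where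
  "Phi eta lam xs p = lam + (\<Sum>m\<in>{p+1..<length xs}. (if xs ! m = 0 then - 2 * eta else 2 * eta))"

definition Wcol :: "(complex \<Rightarrow> complex) \<Rightarrow> complex \<Rightarrow> complex \<Rightarrow>
    int \<Rightarrow> nat list \<Rightarrow> int \<Rightarrow> nat list \<Rightarrow> complex \<Rightarrow> complex \<Rightarrow> complex" where
  "Wcol f eta Lam i1 xs i2 ys v lam =
     (let J = length xs in
      if (\<forall>p\<le>J. ipos i1 xs ys p \<ge> 0) \<and> ipos i1 xs ys J = i2 then
        (\<Prod>p<J. W1 f eta Lam (ipos i1 xs ys p) (xs ! p) (ipos i1 xs ys (Suc p)) (ys ! p)
                  (v + 2 * eta * of_nat p) (Phi eta lam xs p))
      else 0)"

text \<open>Fused weight W_J(i1, j1; i2, j2 | v, lam); the representative K with |K| = j2 is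
  chosen as j2 ones followed by J - j2 zeros (the paper states the sum is independent
  of this choice).\<close>
definition Wfused :: "(complex \<Rightarrow> complex) \<Rightarrow> complex \<Rightarrow> complex \<Rightarrow> nat \<Rightarrow>
    int \<Rightarrow> nat \<Rightarrow> int \<Rightarrow> nat \<Rightarrow> complex \<Rightarrow> complex \<Rightarrow> complex" where
  "Wfused f eta Lam J i1 j1 i2 j2 v lam =
     (if j2 \<le> J then
        (\<Sum>xs\<in>{xs. length xs = J \<and> set xs \<subseteq> {0,1} \<and> sum_list xs = j1}.
           Wcol f eta Lam i1 xs i2 (replicate j2 1 @ replicate (J - j2) 0) v lam)
      else 0)"

end

theory Submission
  imports Defs
begin

text \<open>With all J input edges occupied, the sum defining the fused weight collapses to the single
  all-ones configuration, so the weight is one column product. Along that column the height stays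
  at i for the first j steps (factors W_1(i,1;i,1)) and then rises by one at each of the remaining
  J - j steps (factors W_1(k,1;k+1,0)), while the dynamical parameter at step p is
  \<lambda> + 2\<eta>(J - 1 - p). Regrouping the factors gives the five Pochhammer symbols, the one coming
  from the rising part read in ascending order. Nothing about f is used.\<close>

lemma prod_lessThan_split_divide:
  fixes a b c :: "nat \<Rightarrow> 'a::field"
  assumes "j \<le> J"
  shows "(\<Prod>p<J. (if p < j then a p else b (p - j)) / c p)
    = (\<Prod>p<j. a p) * (\<Prod>q<J - j. b q) / (\<Prod>p<J. c p)"
proof -
  have "{..<J} = {..<j} \<union> {j..<J}" using assms by auto
  then have "(\<Prod>p<J. if p < j then a p else b (p - j))
      = (\<Prod>p<j. a p) * (\<Prod>p\<in>{j..<J}. b (p - j))"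
    by (simp add: prod.union_disjoint ivl_disj_int)
  also have "(\<Prod>p\<in>{j..<J}. b (p - j)) = (\<Prod>q<J - j. b q)"
    using prod.shift_bounds_nat_ivl[of "\<lambda>p. b (p - j)" 0 j "J - j"] assms
    by (simp add: atLeast0LessThan)
  finally show ?thesis by (simp add: prod_dividef)
qed

lemma epoch_of_nat: "epoch f eta a (int k) = (\<Prod>m<k. f (a - 2 * eta * of_nat m))"
  by (simp add: epoch_def)

lemma epoch_of_nat_ascending:
  "epoch f eta (a + 2 * eta * (of_nat k - 1)) (int k) = (\<Prod>m<k. f (a + 2 * eta * of_nat m))"
proof -
  have "epoch f eta (a + 2 * eta * (of_nat k - 1)) (int k)
      = (\<Prod>m<k. f (a + 2 * eta * of_nat (k - Suc m)))"
    unfolding epoch_of_nat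
    by (rule prod.cong) (auto simp: of_nat_diff algebra_simps)
  also have "\<dots> = (\<Prod>m<k. f (a + 2 * eta * of_nat m))"
    using prod.nat_diff_reindex[of "\<lambda>m. f (a + 2 * eta * of_nat m)" k] by simp
  finally show ?thesis .
qed

lemma W1_in1_out1:
  "W1 f eta Lam (int k) 1 (int k) 1 v lam
    = f (eta * (2 * of_nat k - Lam) - v) * f (lam + 2 * eta * (of_nat k - Lam))
      / (f (eta * Lam - v) * f lam)"
  by (simp add: W1_def)

lemma W1_in1_out0:
  "W1 f eta Lam (int k) 1 (int k + 1) 0 v lam
    = f (v + lam + eta * (2 * of_nat k + 2 - Lam)) * f (2 * eta) / (f (eta * Lam - v) * f lam)"
  by (simp add: W1_def)

lemma binary_list_sum_eq_length:
  assumes "set xs \<subseteq> {0, 1}" and "sum_list xs = length xs"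
  shows "xs = replicate (length xs) (1::nat)"
  using assms
proof (induction xs)
  case (Cons x xs)
  have "sum_list xs \<le> length xs"
    using Cons.prems(1) by (induction xs) auto
  with Cons.prems have "x = 1" and "sum_list xs = length xs" by auto
  with Cons show ?case by simp
qed simp

lemma Wfused_all_ones:
  assumes "j2 \<le> J"
  shows "Wfused f eta Lam J i1 J i2 j2 v lam
    = Wcol f eta Lam i1 (replicate J 1) i2 (replicate j2 1 @ replicate (J - j2) 0) v lam"
proof -
  have "{xs. length xs = J \<and> set xs \<subseteq> {0, 1} \<and> sum_list xs = J} = {replicate J (1::nat)}"
    using binary_list_sum_eq_length by (auto simp: sum_list_replicate)
  with assms show ?thesis by (simp add: Wfused_def)
qed

lemma ipos_all_ones:
  assumes "j \<le> J" and "p \<le> J"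
  shows "ipos i1 (replicate J 1) (replicate j 1 @ replicate (J - j) 0) p = i1 + int p - int (min p j)"
  using assms(2)
proof (induction p)
  case (Suc p)
  then show ?case
    using assms(1) by (simp add: ipos_def nth_append)
qed (simp add: ipos_def)

lemma Phi_all_ones:
  assumes "p < J"
  shows "Phi eta lam (replicate J 1) p = lam + 2 * eta * (of_nat J - 1 - of_nat p)"
proof -
  have "Phi eta lam (replicate J 1) p = lam + of_nat (J - Suc p) * (2 * eta)"
    unfolding Phi_def by (subst sum.cong[OF refl, where h = "\<lambda>_. 2 * eta"]) auto
  with assms show ?thesis by (simp add: of_nat_diff algebra_simps)
qed

lemma Wcol_all_ones:
  fixes i :: nat
  assumes "j \<le> J"
  shows "Wcol f eta Lam (int i) (replicate J 1) (int i + int J - int j)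
      (replicate j 1 @ replicate (J - j) 0) v lam
    = (\<Prod>p<j. f (2 * eta * of_nat i - eta * Lam - v - 2 * eta * of_nat p)
               * f (lam + 2 * eta * (of_nat i + of_nat J - Lam - 1) - 2 * eta * of_nat p))
      * (\<Prod>q<J - j. f (v + lam - eta * Lam + 2 * eta * (of_nat i + of_nat J) + 2 * eta * of_nat q)
               * f (2 * eta))
      / (\<Prod>p<J. f (eta * Lam - v - 2 * eta * of_nat p)
               * f (lam + 2 * eta * (of_nat J - 1) - 2 * eta * of_nat p))"
    (is "_ = (\<Prod>p<j. ?a p) * (\<Prod>q<J - j. ?b q) / (\<Prod>p<J. ?c p)")
proof -
  let ?xs = "replicate J (1::nat)" and ?ys = "replicate j (1::nat) @ replicate (J - j) 0"
  have ipos: "ipos (int i) ?xs ?ys p = int i + int p - int (min p j)" if "p \<le> J" for p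
    using ipos_all_ones[OF assms that] .
  have factor: "W1 f eta Lam (ipos (int i) ?xs ?ys p) (?xs ! p) (ipos (int i) ?xs ?ys (Suc p)) (?ys ! p)
      (v + 2 * eta * of_nat p) (Phi eta lam ?xs p)
    = (if p < j then ?a p else ?b (p - j)) / ?c p" if "p < J" for p
  proof (cases "p < j")
    case True
    with that have eqs: "ipos (int i) ?xs ?ys p = int i" "ipos (int i) ?xs ?ys (Suc p) = int i"
      "?xs ! p = 1" "?ys ! p = 1"
      using ipos[of p] ipos[of "Suc p"] by (auto simp: nth_append)
    show ?thesis
      unfolding eqs W1_in1_out1 Phi_all_ones[OF that] using True by (simp add: algebra_simps)
  next
    case False
    with that have eqs: "ipos (int i) ?xs ?ys p = int (i + p - j)"
      "ipos (int i) ?xs ?ys (Suc p) = int (i + p - j) + 1" "?xs ! p = 1" "?ys ! p = 0"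
      using ipos[of p] ipos[of "Suc p"] by (auto simp: nth_append)
    show ?thesis
      unfolding eqs W1_in1_out0 Phi_all_ones[OF that] using False by (simp add: of_nat_diff algebra_simps)
  qed
  have admissible: "(\<forall>p\<le>J. 0 \<le> ipos (int i) ?xs ?ys p) \<and> ipos (int i) ?xs ?ys J = int i + int J - int j"
    using assms ipos by auto
  have "Wcol f eta Lam (int i) ?xs (int i + int J - int j) ?ys v lam
      = (\<Prod>p<J. (if p < j then ?a p else ?b (p - j)) / ?c p)"
    unfolding Wcol_def Let_def length_replicate if_P[OF admissible]
    by (rule prod.cong[OF refl], rule factor) simp
  also have "\<dots> = (\<Prod>p<j. ?a p) * (\<Prod>q<J - j. ?b q) / (\<Prod>p<J. ?c p)"
    by (rule prod_lessThan_split_divide[OF assms])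
  finally show ?thesis .
qed

theorem lemma3p8:
  fixes eta tau Lam v lam :: complex and f :: "complex \<Rightarrow> complex"
    and i J j :: nat
  assumes "Im tau > 0"
    and "f = theta tau \<or> f = sinpi"
    and "J > 0" and "j \<le> J"
  shows "Wfused f eta Lam J (int i) J (int i + int J - int j) j v lam =
    f (2 * eta) ^ (J - j)
    * epoch f eta (2 * eta * of_nat i - eta * Lam - v) (int j)
    / epoch f eta (eta * Lam - v) (int J)
    * (epoch f eta (v + lam - eta * Lam + 2 * eta * (of_nat i + 2 * of_nat J - of_nat j - 1)) (int (J - j))
       * epoch f eta (lam + 2 * eta * (of_nat i + of_nat J - Lam - 1)) (int j)
       / epoch f eta (lam + 2 * eta * (of_nat J - 1)) (int J))"
proof -
  let ?b = "v + lam - eta * Lam + 2 * eta * (of_nat i + of_nat J)"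
  have "v + lam - eta * Lam + 2 * eta * (of_nat i + 2 * of_nat J - of_nat j - 1)
      = ?b + 2 * eta * (of_nat (J - j) - 1)"
    using \<open>j \<le> J\<close> by (simp add: of_nat_diff algebra_simps)
  then have ascending: "epoch f eta (v + lam - eta * Lam + 2 * eta * (of_nat i + 2 * of_nat J - of_nat j - 1))
      (int (J - j)) = (\<Prod>q<J - j. f (?b + 2 * eta * of_nat q))"
    by (simp only: epoch_of_nat_ascending)
  show ?thesis
    unfolding Wfused_all_ones[OF \<open>j \<le> J\<close>] Wcol_all_ones[OF \<open>j \<le> J\<close>] ascending
    unfolding epoch_of_nat prod.distrib prod_constant
    by (simp add: divide_inverse mult_ac)
qed

end
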